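(* Let $\lambda \geq 0$, $0 \leq \gamma \leq 1$, $0\leq\beta<1$ and $\tau \in \mathbb{C}\setminus\{0\}$. Let $f(z)=z+\sum_{k=2}^{\infty}a_kz^k$ belong to $\Theta_{\Sigma}(\tau,\lambda,\gamma,0;\beta)$ (the case $\delta=0$). Then $$|a_2| \leq \min\left\{\frac{2|\tau|(1-\beta)}{1+\lambda+\gamma+5\lambda\gamma},\ \sqrt{\frac{2|\tau|(1-\beta)}{1+2(\lambda+\gamma+5\lambda\gamma)}}\right\}\quad\text{and}\quad |a_3| \leq \frac{2|\tau|(1-\beta)}{1+2(\lambda+\gamma+5\lambda\gamma)}.$$
   Context: Let $\mathbb{U}=\{z\in\mathbb{C}:|z|<1\}$. $\Sigma$ denotes the class of bi-univalent functions: functions $f(z)=z+\sum_{k=2}^\infty a_kz^k$ analytic and univalent in $\mathbb{U}$ whose inverse $f^{-1}$ extends to a univalent function $g$ on $\mathbb{U}$; this $g$ has the expansion $g(w)=w-a_2w^2+(2a_2^2-a_3)w^3-\cdots$. For $\delta\in\mathbb{N}_0$ and $h(z)=z+\sum_{k\ge2}c_kz^k$ analytic in $\mathbb{U}$, the Ruscheweyh derivative is $\mathcal{R}^\delta h(z)=z+\sum_{k=2}^{\infty}\frac{\Gamma(\delta+k)}{\Gamma(k)\Gamma(\delta+1)}c_kz^k$ (for $\delta=0$ it is the identity). For such $h$ and parameters $\lambda,\gamma,\tau\neq0,\delta$, put $$J_h(z)=1+\frac{1}{\tau}\Big[(1-\lambda)(1-\gamma)\frac{\mathcal{R}^\delta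 h(z)}{z}+(\lambda(\gamma+1)+\gamma)(\mathcal{R}^\delta h)'(z)+\lambda\gamma\big(z(\mathcal{R}^\delta h)''(z)-2\big)-1\Big].$$ For $0\le\beta<1$, $\Theta_{\Sigma}(\tau,\lambda,\gamma,\delta;\beta)$ is the set of $f\in\Sigma$ such that $\operatorname{Re}J_f(z)>\beta$ for all $z\in\mathbb{U}$ and $\operatorname{Re}J_g(w)>\beta$ for all $w\in\mathbb{U}$, where $g$ is the extension of $f^{-1}$ to $\mathbb{U}$. *)

theory Defs
  imports "HOL-Complex_Analysis.Complex_Analysis"
begin

definition tcoeff :: "(complex \<Rightarrow> complex) \<Rightarrow> nat \<Rightarrow> complex" where
  "tcoeff h k = (deriv ^^ k) h 0 / of_nat (fact k)"

text \<open>Ruscheweyh derivative: R^d h(z) = z + sum_{k>=2} Gamma(d+k)/(Gamma(k) Gamma(d+1)) c_k z^k;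
  Gamma(d+k)/(Gamma(k)Gamma(d+1)) = (d+k-1 choose d).\<close>
definition ruscheweyh :: "nat \<Rightarrow> (complex \<Rightarrow> complex) \<Rightarrow> complex \<Rightarrow> complex" where
  "ruscheweyh d h z = z + (\<Sum>k. (if k \<ge> 2 then of_nat ((d + k - 1) choose d) * tcoeff h k * z ^ k else 0))"

definition rquot :: "nat \<Rightarrow> (complex \<Rightarrow> complex) \<Rightarrow> complex \<Rightarrow> complex" where
  "rquot d h z = (if z = 0 then deriv (ruscheweyh d h) 0 else ruscheweyh d h z / z)"

definition Jfun :: "complex \<Rightarrow> real \<Rightarrow> real \<Rightarrow> nat \<Rightarrow> (complex \<Rightarrow> complex) \<Rightarrow> complex \<Rightarrow> complex" where
  "Jfun tau lam gam d h z = 1 + (1 / tau) *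
     (of_real ((1 - lam) * (1 - gam)) * rquot d h z
      + of_real (lam * (gam + 1) + gam) * deriv (ruscheweyh d h) z
      + of_real (lam * gam) * (z * deriv (deriv (ruscheweyh d h)) z - 2) - 1)"

text \<open>f is in the class Sigma with g the univalent extension of f^{-1} to the unit disc:
  f normalized, analytic and univalent on U; g analytic and univalent on U and g is
  the inverse of f near 0 (hence g extends f^{-1}).\<close>
definition bi_univalent_pair :: "(complex \<Rightarrow> complex) \<Rightarrow> (complex \<Rightarrow> complex) \<Rightarrow> bool" where
  "bi_univalent_pair f g \<longleftrightarrow>
     f holomorphic_on ball 0 1 \<and> inj_on f (ball 0 1) \<and> f 0 = 0 \<and> deriv f 0 = 1 \<and>
     g holomorphic_on ball 0 1 \<and> inj_on g (ball 0 1) \<and>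
     (\<exists>e>0. \<forall>w\<in>ball 0 e. w \<in> f ` ball 0 1 \<and> g w \<in> ball 0 1 \<and> f (g w) = w)"

definition Theta_Sigma :: "complex \<Rightarrow> real \<Rightarrow> real \<Rightarrow> nat \<Rightarrow> real \<Rightarrow> (complex \<Rightarrow> complex) set" where
  "Theta_Sigma tau lam gam d beta = {f. \<exists>g. bi_univalent_pair f g \<and>
      (\<forall>z\<in>ball 0 1. Re (Jfun tau lam gam d f z) > beta) \<and>
      (\<forall>w\<in>ball 0 1. Re (Jfun tau lam gam d g w) > beta)}"

end

theory Submission
  imports Defs
begin

(* For delta = 0 the Ruscheweyh derivative of a normalized h is h itself, and
   J_h(z) = 1 + (1/tau) sum_n w_n a_(n+1) z^n with w_n = Jfun_weight lam gam n; w_1 and w_2 are the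
   two denominators of the theorem. Since J_h(0) = 1 and Re J_h > beta, Caratheodory's inequality
   |p^(n)(0)| <= 2 (1 - beta) n! gives w_n |a_(n+1)| <= 2 |tau| (1 - beta), for h = f and for h = g.
   This bounds |a_2| and |a_3|; as the third coefficient of g = f^-1 is 2 a_2^2 - a_3, adding the two
   bounds on third coefficients yields 2 |a_2|^2 <= 4 |tau| (1 - beta) / w_2, the square-root bound.
   Caratheodory's inequality is proved for every n by averaging p over the n-th roots of unity, which
   kills the Taylor coefficients of order 1, ..., n - 1 without changing the n-th one, and applying
   Cauchy's estimate to the Cayley transform (p - 1) / (p + 1 - 2 beta), a self-map of the disc. *)

lemma higher_deriv_deriv: "(deriv ^^ k) (deriv F) = (deriv ^^ Suc k) F"
  by (simp only: funpow_Suc_right o_apply)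

lemma higher_deriv_sum:
  fixes z :: complex
  assumes "finite I" "\<And>i. i \<in> I \<Longrightarrow> f i holomorphic_on S" "open S" "z \<in> S"
  shows "(deriv ^^ n) (\<lambda>w. \<Sum>i\<in>I. f i w) z = (\<Sum>i\<in>I. (deriv ^^ n) (f i) z)"
  using assms(1,2)
proof (induction I rule: finite_induct)
  case (insert i I)
  then show ?case
    by (simp add: higher_deriv_add[OF _ _ assms(3,4)] holomorphic_on_sum)
qed simp

lemma higher_deriv_Suc_mult_ident:
  fixes F :: "complex \<Rightarrow> complex"
  assumes "F holomorphic_on S" "open S" "0 \<in> S"
  shows "(deriv ^^ Suc n) (\<lambda>z. z * F z) 0 = of_nat (Suc n) * (deriv ^^ n) F 0"
proof -
  have "(deriv ^^ Suc n) (\<lambda>z. z * F z) 0 =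
      (\<Sum>i = 0..Suc n. of_nat (Suc n choose i) * (deriv ^^ i) (\<lambda>z. z) 0 * (deriv ^^ (Suc n - i)) F 0)"
    by (rule higher_deriv_mult[OF _ assms]) simp
  also have "\<dots> = (\<Sum>i\<in>{1}. of_nat (Suc n choose i) * (deriv ^^ (Suc n - i)) F 0)"
    by (rule sum.mono_neutral_cong_right) auto
  finally show ?thesis by simp
qed

lemma DERIV_unique_on_open:
  assumes "open S" "w \<in> S" "(F has_field_derivative D) (at w)" "(G has_field_derivative D') (at w)"
    and "\<And>x. x \<in> S \<Longrightarrow> F x = G x"
  shows "D = D'"
proof -
  have "(G has_field_derivative D) (at w)"
    by (rule has_field_derivative_transform_within_open[OF assms(3,1,2)]) (rule assms(5))
  from DERIV_unique[OF this assms(4)] show ?thesis .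
qed

lemma norm_higher_deriv_le_fact:
  assumes hol: "w holomorphic_on ball 0 1" and bd: "\<forall>z\<in>ball 0 1. norm (w z) \<le> 1"
  shows "norm ((deriv ^^ n) w 0) \<le> fact n"
proof -
  let ?x = "norm ((deriv ^^ n) w 0)"
  have le: "?x * r ^ n \<le> fact n" if r: "0 < r" "r < 1" for r :: real
  proof -
    have "?x \<le> fact n * 1 / r ^ n"
    proof (rule Cauchy_inequality)
      show "w holomorphic_on ball 0 r"
        using r by (auto intro: holomorphic_on_subset[OF hol])
      show "continuous_on (cball 0 r) w"
        using r by (intro holomorphic_on_imp_continuous_on holomorphic_on_subset[OF hol]) auto
      show "norm (w x) \<le> 1" if "norm (0 - x) = r" for x
        using bd that r by auto
    qed fact
    then show ?thesis using r by (simp add: field_simps)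
  qed
  have "((\<lambda>r. ?x * r ^ n) \<longlongrightarrow> ?x * 1 ^ n) (at_left (1::real))"
    by (intro tendsto_intros)
  moreover have "eventually (\<lambda>r. ?x * r ^ n \<le> fact n) (at_left (1::real))"
    using eventually_at_left_real[of 0 "1::real"] by (rule eventually_mono) (auto intro: le)
  ultimately have "?x * 1 ^ n \<le> fact n"
    by (rule tendsto_le[OF trivial_limit_at_left_real tendsto_const])
  then show ?thesis by simp
qed

lemma norm_le_norm_add_of_Re_ge:
  assumes "0 \<le> M" "- M \<le> Re z"
  shows "norm z \<le> norm (z + of_real (2 * M))"
proof -
  have "(Re z)\<^sup>2 \<le> (Re z + 2 * M)\<^sup>2"
    using mult_nonneg_nonneg[of M "M + Re z"] assms by (simp add: power2_eq_square algebra_simps)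
  then have "(norm z)\<^sup>2 \<le> (norm (z + of_real (2 * M)))\<^sup>2"
    by (simp add: cmod_power2)
  then show ?thesis
    by (rule power2_le_imp_le) simp
qed

lemma higher_deriv_cayley_relation:
  assumes hol: "u holomorphic_on ball 0 1" "w holomorphic_on ball 0 1"
    and eq: "\<And>z. z \<in> ball 0 1 \<Longrightarrow> u z = c * w z + w z * u z"
    and u0: "u 0 = 0" and w0: "w 0 = 0"
    and vanish: "\<And>k. 0 < k \<Longrightarrow> k < n \<Longrightarrow> (deriv ^^ k) u 0 = 0"
  shows "(deriv ^^ n) u 0 = c * (deriv ^^ n) w 0"
proof -
  have "eventually (\<lambda>z. u z = c * w z + w z * u z) (nhds 0)"
    using eq by (intro eventually_nhds_in_open[of "ball 0 1", THEN eventually_mono]) auto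
  then have "(deriv ^^ n) u 0 = (deriv ^^ n) (\<lambda>z. c * w z + w z * u z) 0"
    by (rule higher_deriv_cong_ev[OF _ refl])
  also have "\<dots> = c * (deriv ^^ n) w 0 +
      (\<Sum>i = 0..n. of_nat (n choose i) * (deriv ^^ i) w 0 * (deriv ^^ (n - i)) u 0)"
    using hol by (simp add: higher_deriv_add[where S="ball 0 1"] higher_deriv_cmult[where A="ball 0 1"]
        higher_deriv_mult[where S="ball 0 1"] holomorphic_intros)
  also have "(\<Sum>i = 0..n. of_nat (n choose i) * (deriv ^^ i) w 0 * (deriv ^^ (n - i)) u 0) = 0"
  proof (intro sum.neutral ballI)
    fix i assume "i \<in> {0..n}"
    then show "of_nat (n choose i) * (deriv ^^ i) w 0 * (deriv ^^ (n - i)) u 0 = 0"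
      using u0 w0 vanish[of "n - i"] by (cases "i = 0"; cases "i = n") auto
  qed
  finally show ?thesis by simp
qed

definition root_unity :: "nat \<Rightarrow> nat \<Rightarrow> complex" where
  "root_unity n j = exp (2 * of_real pi * \<i> * of_nat j / of_nat n)"

lemma norm_root_unity [simp]: "norm (root_unity n j) = 1"
  by (simp add: root_unity_def norm_exp_eq_Re)

lemma sum_root_unity_power:
  assumes "n > 0"
  shows "(\<Sum>j<n. root_unity n j ^ k) = (if n dvd k then of_nat n else 0)"
proof -
  define \<zeta> where "\<zeta> = root_unity n k"
  have pow: "root_unity n j ^ k = \<zeta> ^ j" for j
    by (simp add: root_unity_def \<zeta>_def flip: exp_of_nat_mult) (simp add: mult_ac)
  have "\<zeta> = 1 \<longleftrightarrow> n dvd k"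
    using complex_root_unity_eq_1[of n k] assms by (simp add: \<zeta>_def root_unity_def)
  moreover have "\<zeta> ^ n = 1"
    using complex_root_unity[of n k] assms by (simp add: \<zeta>_def root_unity_def)
  ultimately show ?thesis
    unfolding pow by (auto simp: geometric_sum)
qed

definition rotation_mean :: "nat \<Rightarrow> (complex \<Rightarrow> complex) \<Rightarrow> complex \<Rightarrow> complex" where
  "rotation_mean n f z = (\<Sum>j<n. f (root_unity n j * z)) / of_nat n"

lemma holomorphic_on_rotate:
  assumes "f holomorphic_on ball 0 1" "norm c = 1"
  shows "(\<lambda>z. f (c * z)) holomorphic_on ball 0 1"
  by (rule holomorphic_on_compose_gen[OF _ assms(1), unfolded o_def])
     (auto intro!: holomorphic_intros simp: norm_mult assms(2))

lemma holomorphic_on_rotation_mean: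
  assumes "f holomorphic_on ball 0 1"
  shows "rotation_mean n f holomorphic_on ball 0 1"
  unfolding rotation_mean_def[abs_def] divide_inverse
  by (intro holomorphic_intros holomorphic_on_rotate[OF assms]) simp

lemma Re_rotation_mean_gt:
  assumes "n > 0" "\<forall>z\<in>ball 0 1. Re (f z) > b" "z \<in> ball 0 1"
  shows "Re (rotation_mean n f z) > b"
proof -
  have "(\<Sum>j<n. b) < (\<Sum>j<n. Re (f (root_unity n j * z)))"
    using assms by (intro sum_strict_mono) (auto simp: norm_mult)
  then show ?thesis
    using assms(1) by (simp add: rotation_mean_def Re_divide_of_nat Re_sum field_simps)
qed

lemma higher_deriv_rotation_mean:
  assumes "f holomorphic_on ball 0 1" "n > 0"
  shows "(deriv ^^ k) (rotation_mean n f) 0 = (if n dvd k then (deriv ^^ k) f 0 else 0)"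
proof -
  have hol: "(\<lambda>z. f (root_unity n j * z)) holomorphic_on ball 0 1" for j
    by (rule holomorphic_on_rotate[OF assms(1)]) simp
  have rot: "(deriv ^^ k) (\<lambda>z. f (root_unity n j * z)) 0 = root_unity n j ^ k * (deriv ^^ k) f 0" for j
    using higher_deriv_compose_linear[OF assms(1), of "ball 0 1" 0 "root_unity n j" k]
    by (simp add: norm_mult)
  have "(deriv ^^ k) (rotation_mean n f) 0 =
      (deriv ^^ k) (\<lambda>z. \<Sum>j<n. f (root_unity n j * z)) 0 / of_nat n"
    unfolding rotation_mean_def[abs_def] divide_inverse mult.commute[of _ "inverse _"]
    by (rule higher_deriv_cmult[where A="ball 0 1"]) (use hol in \<open>auto intro!: holomorphic_intros\<close>)
  also have "\<dots> = (\<Sum>j<n. root_unity n j ^ k) * (deriv ^^ k) f 0 / of_nat n"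
    by (simp add: higher_deriv_sum[OF _ hol] rot sum_distrib_right)
  finally show ?thesis
    using assms(2) by (simp add: sum_root_unity_power)
qed

theorem caratheodory_higher_deriv:
  assumes hol: "p holomorphic_on ball 0 1" and p0: "p 0 = 1"
    and re: "\<forall>z\<in>ball 0 1. Re (p z) > beta" and n: "n > 0"
  shows "norm ((deriv ^^ n) p 0) \<le> 2 * (1 - beta) * fact n"
proof -
  define M where "M = 1 - beta"
  have "beta < Re (p 0)" using re by simp
  then have M: "M > 0" using p0 by (simp add: M_def)
  define u where "u z = rotation_mean n p z - 1" for z
  define w where "w z = u z / (u z + of_real (2 * M))" for z
  have hol_u: "u holomorphic_on ball 0 1"
    unfolding u_def[abs_def] by (intro holomorphic_intros holomorphic_on_rotation_mean hol)
  have du: "(deriv ^^ k) u 0 = (if n dvd k then (deriv ^^ k) p 0 else 0)" if "k > 0" for k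
    unfolding u_def using that hol_u hol n
    by (simp add: higher_deriv_diff[where S="ball 0 1"] holomorphic_on_rotation_mean
        higher_deriv_rotation_mean)
  have u0: "u 0 = 0"
    using p0 n by (simp add: u_def rotation_mean_def)
  have re_u: "Re (u z) > - M" if "z \<in> ball 0 1" for z
    using Re_rotation_mean_gt[OF n re that] by (simp add: u_def M_def)
  have nz: "u z + of_real (2 * M) \<noteq> 0" if "z \<in> ball 0 1" for z
    using re_u[OF that] M by (auto simp: complex_eq_iff)
  have hol_w: "w holomorphic_on ball 0 1"
    unfolding w_def[abs_def] using hol_u nz by (intro holomorphic_intros) auto
  have bd_w: "\<forall>z\<in>ball 0 1. norm (w z) \<le> 1"
    using norm_le_norm_add_of_Re_ge[of M] re_u M nz
    by (auto simp: w_def norm_divide divide_le_eq_1 less_imp_le)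
  have "(deriv ^^ n) u 0 = of_real (2 * M) * (deriv ^^ n) w 0"
  proof (rule higher_deriv_cayley_relation[OF hol_u hol_w _ u0])
    show "u z = of_real (2 * M) * w z + w z * u z" if "z \<in> ball 0 1" for z
      using nz[OF that] by (simp add: w_def divide_simps) (simp add: algebra_simps)
    show "w 0 = 0" by (simp add: w_def u0)
    show "(deriv ^^ k) u 0 = 0" if "0 < k" "k < n" for k
      using du[OF that(1)] that by (auto dest: dvd_imp_le)
  qed
  then have "norm ((deriv ^^ n) p 0) = 2 * M * norm ((deriv ^^ n) w 0)"
    using du[OF n] M by (simp add: norm_mult)
  also have "\<dots> \<le> 2 * M * fact n"
    using norm_higher_deriv_le_fact[OF hol_w bd_w] M by simp
  finally show ?thesis by (simp add: M_def)
qed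

definition Jfun_weight :: "real \<Rightarrow> real \<Rightarrow> nat \<Rightarrow> real" where
  "Jfun_weight lam gam n = (1 - lam) * (1 - gam) + real (Suc n) * (lam * (gam + 1) + gam)
     + real (n * Suc n) * (lam * gam)"

context
  fixes h :: "complex \<Rightarrow> complex"
  assumes hol: "h holomorphic_on ball 0 1" and h0: "h 0 = 0" and h1: "deriv h 0 = 1"
begin

lemma ruscheweyh_0_eq:
  assumes z: "z \<in> ball 0 1"
  shows "ruscheweyh 0 h z = h z"
proof -
  define s where "s n = (deriv ^^ n) h 0 / fact n * z ^ n" for n
  have "s sums h z"
    unfolding s_def using holomorphic_power_series[OF hol z] by simp
  then have "(\<lambda>n. if n \<in> {0, 1} then 0 else s n) sums (h z + (\<Sum>n\<in>{0, 1}. 0 - s n))"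
    by (rule sums_If_finite_set') auto
  moreover have "(\<Sum>n\<in>{0::nat, 1}. 0 - s n) = - z"
    using h0 h1 by (simp add: s_def)
  moreover have "(\<lambda>k. if k \<ge> 2 then of_nat ((0 + k - 1) choose 0) * tcoeff h k * z ^ k else 0) =
      (\<lambda>n. if n \<in> {0, 1} then 0 else s n)"
    by (auto simp: s_def tcoeff_def)
  ultimately show ?thesis
    unfolding ruscheweyh_def by (simp add: sums_iff)
qed

lemma higher_deriv_ruscheweyh_0:
  assumes "z \<in> ball 0 1"
  shows "(deriv ^^ k) (ruscheweyh 0 h) z = (deriv ^^ k) h z"
  by (rule higher_deriv_cong_ev[OF eventually_nhds_in_open[of "ball 0 1", THEN eventually_mono] refl])
     (use assms ruscheweyh_0_eq in auto)

lemma rquot_0_eq: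
  assumes "z \<in> ball 0 1"
  shows "rquot 0 h z = (if z = 0 then deriv h 0 else h z / z)"
  using assms higher_deriv_ruscheweyh_0[of 0 1] ruscheweyh_0_eq[OF assms] h0
  by (simp add: rquot_def)

lemma holomorphic_on_rquot_0: "rquot 0 h holomorphic_on ball 0 1"
  by (rule holomorphic_transform[OF pole_lemma_open[OF hol, of 0]]) (auto simp: rquot_0_eq h0)

lemma higher_deriv_rquot_0: "(deriv ^^ n) (rquot 0 h) 0 = (deriv ^^ Suc n) h 0 / of_nat (Suc n)"
proof -
  have "eventually (\<lambda>z. h z = z * rquot 0 h z) (nhds 0)"
    using h0 by (intro eventually_nhds_in_open[of "ball 0 1", THEN eventually_mono]) (auto simp: rquot_0_eq)
  then have "(deriv ^^ Suc n) h 0 = (deriv ^^ Suc n) (\<lambda>z. z * rquot 0 h z) 0"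
    by (rule higher_deriv_cong_ev[OF _ refl])
  also have "\<dots> = of_nat (Suc n) * (deriv ^^ n) (rquot 0 h) 0"
    by (rule higher_deriv_Suc_mult_ident[OF holomorphic_on_rquot_0]) auto
  finally show ?thesis
    by (simp add: field_simps del: of_nat_Suc)
qed

lemma higher_deriv_mult_ident_deriv2:
  "(deriv ^^ n) (\<lambda>z. z * deriv (deriv h) z) 0 = of_nat n * (deriv ^^ Suc n) h 0"
proof (cases n)
  case (Suc m)
  have "deriv (deriv h) holomorphic_on ball 0 1"
    by (auto intro!: holomorphic_deriv hol)
  from higher_deriv_Suc_mult_ident[OF this, of m] show ?thesis
    by (simp add: Suc higher_deriv_deriv del: funpow.simps)
qed simp

lemma Jfun_0_eq:
  assumes "z \<in> ball 0 1"
  shows "Jfun tau lam gam 0 h z = 1 + (1 / tau) *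
     (of_real ((1 - lam) * (1 - gam)) * rquot 0 h z
      + of_real (lam * (gam + 1) + gam) * deriv h z
      + of_real (lam * gam) * (z * deriv (deriv h) z - 2) - 1)"
  using higher_deriv_ruscheweyh_0[OF assms, of 1] higher_deriv_ruscheweyh_0[OF assms, of 2]
  by (simp add: Jfun_def numeral_2_eq_2)

lemma holomorphic_on_Jfun_0: "Jfun tau lam gam 0 h holomorphic_on ball 0 1"
  by (rule holomorphic_transform[where f="\<lambda>z. 1 + (1 / tau) *
     (of_real ((1 - lam) * (1 - gam)) * rquot 0 h z
      + of_real (lam * (gam + 1) + gam) * deriv h z
      + of_real (lam * gam) * (z * deriv (deriv h) z - 2) - 1)"])
     (auto simp: Jfun_0_eq intro!: holomorphic_intros holomorphic_deriv hol holomorphic_on_rquot_0)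

lemma Jfun_0_at_0: "Jfun tau lam gam 0 h 0 = 1"
  using h1 by (simp add: Jfun_0_eq rquot_0_eq algebra_simps)

lemma higher_deriv_Jfun_0:
  assumes "n > 0"
  shows "(deriv ^^ n) (Jfun tau lam gam 0 h) 0 =
    of_real (Jfun_weight lam gam n) * fact n * tcoeff h (Suc n) / tau"
proof -
  define c1 c2 c3 where "c1 = complex_of_real ((1 - lam) * (1 - gam))"
    and "c2 = complex_of_real (lam * (gam + 1) + gam)" and "c3 = complex_of_real (lam * gam)"
  define t where "t = 1 / tau"
  have Suc_nz: "(1 + of_nat n :: complex) \<noteq> 0"
    using of_nat_neq_0[of n, where 'a=complex] by simp
  have hol': "deriv h holomorphic_on ball 0 1" "deriv (deriv h) holomorphic_on ball 0 1"
    by (auto intro!: holomorphic_deriv hol)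
  have "eventually (\<lambda>z. Jfun tau lam gam 0 h z = 1 + t *
      (c1 * rquot 0 h z + c2 * deriv h z + c3 * (z * deriv (deriv h) z) - (2 * c3 + 1))) (nhds 0)"
    by (intro eventually_nhds_in_open[of "ball 0 1", THEN eventually_mono])
       (auto simp: Jfun_0_eq c1_def c2_def c3_def t_def algebra_simps)
  then have "(deriv ^^ n) (Jfun tau lam gam 0 h) 0 = t * (c1 * (deriv ^^ n) (rquot 0 h) 0
      + c2 * (deriv ^^ n) (deriv h) 0 + c3 * (deriv ^^ n) (\<lambda>z. z * deriv (deriv h) z) 0)"
    using hol' holomorphic_on_rquot_0 assms
    by (simp add: higher_deriv_cong_ev[OF _ refl] higher_deriv_add[where S="ball 0 1"]
        higher_deriv_diff[where S="ball 0 1"] higher_deriv_cmult[where A="ball 0 1"] holomorphic_intros)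
  also have "\<dots> = t * (c1 / of_nat (Suc n) + c2 + c3 * of_nat n) * (deriv ^^ Suc n) h 0"
    by (simp add: higher_deriv_rquot_0 higher_deriv_deriv higher_deriv_mult_ident_deriv2 algebra_simps
        del: funpow.simps)
  also have "\<dots> = of_real (Jfun_weight lam gam n) * ((deriv ^^ Suc n) h 0 / of_nat (Suc n)) / tau"
    using Suc_nz by (cases "tau = 0") (simp_all add: Jfun_weight_def c1_def c2_def c3_def t_def field_simps)
  also have "\<dots> = of_real (Jfun_weight lam gam n) * fact n * tcoeff h (Suc n) / tau"
    unfolding tcoeff_def of_nat_fact unfolding fact_Suc[of n] by (simp del: of_nat_Suc)
  finally show ?thesis .
qed

lemma Jfun_0_coeff_bound:
  assumes tau: "tau \<noteq> 0" and re: "\<forall>z\<in>ball 0 1. Re (Jfun tau lam gam 0 h z) > beta"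
    and n: "n > 0"
  shows "\<bar>Jfun_weight lam gam n\<bar> * norm (tcoeff h (Suc n)) \<le> 2 * norm tau * (1 - beta)"
proof -
  have "\<bar>Jfun_weight lam gam n\<bar> * fact n * norm (tcoeff h (Suc n)) / norm tau
      = norm ((deriv ^^ n) (Jfun tau lam gam 0 h) 0)"
    by (simp add: higher_deriv_Jfun_0[OF n] norm_mult norm_divide)
  also have "\<dots> \<le> 2 * (1 - beta) * fact n"
    by (rule caratheodory_higher_deriv[OF holomorphic_on_Jfun_0 Jfun_0_at_0 re n])
  finally have "fact n * (\<bar>Jfun_weight lam gam n\<bar> * norm (tcoeff h (Suc n)))
      \<le> fact n * (2 * norm tau * (1 - beta))"
    using tau by (simp add: field_simps)
  then show ?thesis
    by (simp add: mult_le_cancel_left_pos)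
qed

end

lemma deriv_inverse_at_0:
  assumes holf: "f holomorphic_on ball 0 1" and holg: "g holomorphic_on ball 0 1"
    and S: "open S" "0 \<in> S" "S \<subseteq> ball 0 1"
    and inv: "\<And>w. w \<in> S \<Longrightarrow> g w \<in> ball 0 1 \<and> f (g w) = w"
    and g0: "g 0 = 0" and f1: "deriv f 0 = 1"
  shows "deriv g 0 = 1"
    "deriv (deriv (deriv g)) 0 = 3 * (deriv (deriv f) 0)\<^sup>2 - deriv (deriv (deriv f)) 0"
proof -
  define f' f'' f''' where "f' = deriv f" and "f'' = deriv f'" and "f''' = deriv f''"
  define g' g'' g''' where "g' = deriv g" and "g'' = deriv g'" and "g''' = deriv g''"
  have has_deriv: "(F has_field_derivative deriv F x) (at x)"
    if "F holomorphic_on ball 0 1" "x \<in> ball 0 1" for F x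
    using that by (auto intro: holomorphic_derivI)
  have hol: "f' holomorphic_on ball 0 1" "f'' holomorphic_on ball 0 1"
    "g' holomorphic_on ball 0 1" "g'' holomorphic_on ball 0 1"
    unfolding f'_def f''_def g'_def g''_def by (auto intro!: holomorphic_deriv holf holg)
  note Df = has_deriv[OF holf, folded f'_def] has_deriv[OF hol(1), folded f''_def]
    has_deriv[OF hol(2), folded f'''_def]
  note Dg = has_deriv[OF holg, folded g'_def] has_deriv[OF hol(3), folded g''_def]
    has_deriv[OF hol(4), folded g'''_def]
  have in_ball: "g w \<in> ball 0 1" "w \<in> ball 0 1" if "w \<in> S" for w
    using that S(3) inv by auto
  \<comment> \<open>Differentiate \<open>f (g w) = w\<close> once and twice on \<open>S\<close>, and a third time at 0.\<close>
  have deriv1_comp: "f' (g w) * g' w = 1" if w: "w \<in> S" for w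
    using DERIV_chain2[OF Df(1) Dg(1), OF in_ball[OF w]] DERIV_ident
    by (rule DERIV_unique_on_open[OF S(1) w]) (use inv in auto)
  have deriv2_comp: "f'' (g w) * g' w * g' w + g'' w * f' (g w) = 0" if w: "w \<in> S" for w
    using DERIV_mult[OF DERIV_chain2[OF Df(2) Dg(1)] Dg(2), OF in_ball[OF w] in_ball(2)[OF w]]
      DERIV_const
    by (rule DERIV_unique_on_open[OF S(1) w]) (use deriv1_comp in auto)
  note b0 = in_ball[OF S(2)]
  have deriv3_comp: "(f''' (g 0) * g' 0 * g' 0 + g'' 0 * f'' (g 0)) * g' 0 + g'' 0 * (f'' (g 0) * g' 0)
      + (g''' 0 * f' (g 0) + f'' (g 0) * g' 0 * g'' 0) = 0"
    using DERIV_add[OF DERIV_mult[OF DERIV_mult[OF DERIV_chain2[OF Df(3)[OF b0(1)] Dg(1)[OF b0(2)]]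
        Dg(2)[OF b0(2)]] Dg(2)[OF b0(2)]]
        DERIV_mult[OF Dg(3)[OF b0(2)] DERIV_chain2[OF Df(2)[OF b0(1)] Dg(1)[OF b0(2)]]]] DERIV_const
    by (rule DERIV_unique_on_open[OF S(1,2)]) (use deriv2_comp in auto)
  show g1: "deriv g 0 = 1"
    using deriv1_comp[OF S(2)] g0 f1 by (simp add: f'_def g'_def)
  have "g'' 0 = - f'' 0"
    using deriv2_comp[OF S(2)] g0 f1 g1 by (simp add: f'_def g'_def add_eq_0_iff)
  then show "deriv (deriv (deriv g)) 0 = 3 * (deriv (deriv f) 0)\<^sup>2 - deriv (deriv (deriv f)) 0"
    using deriv3_comp g0 f1 g1 by (simp add: f'_def f''_def f'''_def g'_def g''_def g'''_def
        algebra_simps power2_eq_square)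
qed

lemma bi_univalent_pair_inverse_coeffs:
  assumes "bi_univalent_pair f g"
  shows "g 0 = 0" "deriv g 0 = 1" "tcoeff g 3 = 2 * (tcoeff f 2)\<^sup>2 - tcoeff f 3"
proof -
  obtain e where holf: "f holomorphic_on ball 0 1" and inj: "inj_on f (ball 0 1)"
    and f0: "f 0 = 0" and f1: "deriv f 0 = 1" and holg: "g holomorphic_on ball 0 1"
    and e: "e > 0" and inv: "\<forall>w\<in>ball 0 e. g w \<in> ball 0 1 \<and> f (g w) = w"
    using assms unfolding bi_univalent_pair_def by blast
  have "g 0 \<in> ball 0 1" "f (g 0) = f 0"
    using inv e f0 by auto
  then show g0: "g 0 = 0"
    using inj_onD[OF inj] by auto
  have S: "open (ball 0 (min e 1))" "0 \<in> ball 0 (min e 1)" "ball 0 (min e 1) \<subseteq> ball 0 1"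
    using e by auto
  note D = deriv_inverse_at_0[OF holf holg S _ g0 f1]
  show "deriv g 0 = 1"
    by (rule D(1)) (use inv in auto)
  have "deriv (deriv (deriv g)) 0 = 3 * (deriv (deriv f) 0)\<^sup>2 - deriv (deriv (deriv f)) 0"
    by (rule D(2)) (use inv in auto)
  then show "tcoeff g 3 = 2 * (tcoeff f 2)\<^sup>2 - tcoeff f 3"
    by (simp add: tcoeff_def numeral_3_eq_3 numeral_2_eq_2 field_simps power2_eq_square)
qed

theorem corollary7:
  fixes tau :: complex and lam gam beta :: real and f :: "complex \<Rightarrow> complex"
  assumes "lam \<ge> 0" "0 \<le> gam" "gam \<le> 1" "0 \<le> beta" "beta < 1" "tau \<noteq> 0"
    and "f \<in> Theta_Sigma tau lam gam 0 beta"
  shows "cmod (tcoeff f 2) \<le> min (2 * cmod tau * (1 - beta) / (1 + lam + gam + 5 * lam * gam))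
            (sqrt (2 * cmod tau * (1 - beta) / (1 + 2 * (lam + gam + 5 * lam * gam))))
       \<and> cmod (tcoeff f 3) \<le> 2 * cmod tau * (1 - beta) / (1 + 2 * (lam + gam + 5 * lam * gam))"
proof -
  obtain g where bi: "bi_univalent_pair f g"
    and Jf: "\<forall>z\<in>ball 0 1. Re (Jfun tau lam gam 0 f z) > beta"
    and Jg: "\<forall>w\<in>ball 0 1. Re (Jfun tau lam gam 0 g w) > beta"
    using assms(7) unfolding Theta_Sigma_def by blast
  have f: "f holomorphic_on ball 0 1" "f 0 = 0" "deriv f 0 = 1" and holg: "g holomorphic_on ball 0 1"
    using bi unfolding bi_univalent_pair_def by auto
  note g = bi_univalent_pair_inverse_coeffs[OF bi]
  \<comment> \<open>Only \<open>lam, gam \<ge> 0\<close> matter, to make the weights positive.\<close>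
  define A B where "A = 1 + lam + gam + 5 * lam * gam" and "B = 1 + 2 * (lam + gam + 5 * lam * gam)"
  have "Jfun_weight lam gam 1 = A" "Jfun_weight lam gam 2 = B" "A > 0" "B > 0"
    using assms(1,2) by (simp_all add: Jfun_weight_def A_def B_def algebra_simps add_pos_nonneg)
  then have a2: "A * cmod (tcoeff f 2) \<le> 2 * cmod tau * (1 - beta)"
    and a3: "B * cmod (tcoeff f 3) \<le> 2 * cmod tau * (1 - beta)"
    and b3: "B * cmod (tcoeff g 3) \<le> 2 * cmod tau * (1 - beta)"
    using Jfun_0_coeff_bound[OF f assms(6) Jf, of 1] Jfun_0_coeff_bound[OF f assms(6) Jf, of 2]
      Jfun_0_coeff_bound[OF holg g(1,2) assms(6) Jg, of 2]
    by (simp_all add: numeral_2_eq_2 numeral_3_eq_3)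
  have "2 * cmod (tcoeff f 2) ^ 2 = cmod (tcoeff f 3 + tcoeff g 3)"
    by (simp add: g(3) norm_mult norm_power)
  also have "\<dots> \<le> cmod (tcoeff f 3) + cmod (tcoeff g 3)"
    by (rule norm_triangle_ineq)
  finally have "B * (2 * cmod (tcoeff f 2) ^ 2) \<le> B * (cmod (tcoeff f 3) + cmod (tcoeff g 3))"
    using \<open>B > 0\<close> by simp
  then have "cmod (tcoeff f 2) ^ 2 \<le> 2 * cmod tau * (1 - beta) / B"
    using a3 b3 \<open>B > 0\<close> by (simp add: field_simps)
  then show ?thesis
    using a2 a3 \<open>A > 0\<close> \<open>B > 0\<close> by (simp add: real_le_rsqrt A_def B_def field_simps)
qed

end
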